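(* Let $G$ be a group with finite symmetric generating set $Z$, let $X,Y$ be finite sets equipped with maps to $G$, and let $K\ge0$. Then the set $$\mathcal{M}=\{(U,V)\in B^*\mid (U,V)\text{ is a } K\text{-synchronous BCD pair in }(G,d_Z)\}$$ is a regular language over the alphabet $B$.
   Context: Elements of $X$ and $Y$ are regarded as elements of $G$ via the given maps. Let $\$_X\notin X$, $\$_Y\notin Y$ be padding symbols interpreted as the identity of $G$, $X^{\$}=X\cup\{\$_X\}$, $Y^{\$}=Y\cup\{\$_Y\}$ and $B=X^{\$}\times Y^{\$}$ (a finite alphabet). A word over $B$ is written $(U,V)$ with $U\in(X^{\$})^*$, $V\in(Y^{\$})^*$ of the same length. For a word $W$, $W_j$ is its prefix of length $j$ ($W_j=W$ if $j>\ell(W)$). $(U,V)\in B^*$ is a $K$-synchronous BCD pair in $(G,d_Z)$ if there exists $g\in G$ with $|g|_Z\le K$ such that $gU=_GVg$ and $|V_j^{-1}gU_j|_Z\le K$ for all $j=0,1,2,\dots$. *)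

theory Defs
  imports "HOL-Algebra.Algebra"
begin

definition word_length :: "('a, 'b) monoid_scheme \<Rightarrow> 'a set \<Rightarrow> 'a \<Rightarrow> nat" where
  "word_length G Z g = (LEAST n. \<exists>zs. length zs = n \<and> set zs \<subseteq> Z \<and>
      g = foldr (\<lambda>z acc. z \<otimes>\<^bsub>G\<^esub> acc) zs (one G))"

text \<open>Padded letters: None is the padding symbol, evaluated as the identity.\<close>
definition pad_val :: "('a, 'b) monoid_scheme \<Rightarrow> ('c \<Rightarrow> 'a) \<Rightarrow> 'c option \<Rightarrow> 'a" where
  "pad_val G f a = (case a of None \<Rightarrow> (one G) | Some x \<Rightarrow> f x)"

definition word_val :: "('a, 'b) monoid_scheme \<Rightarrow> ('c \<Rightarrow> 'a) \<Rightarrow> 'c option list \<Rightarrow> 'a" where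
  "word_val G f U = foldr (\<lambda>a acc. pad_val G f a \<otimes>\<^bsub>G\<^esub> acc) U (one G)"

definition padded :: "'c set \<Rightarrow> 'c option set" where
  "padded A = insert None (image Some A)"

text \<open>(U,V) (given as a list of letter pairs W) is a K-synchronous BCD pair.\<close>
definition sync_BCD_pair ::
  "('a, 'b) monoid_scheme \<Rightarrow> 'a set \<Rightarrow> ('x \<Rightarrow> 'a) \<Rightarrow> ('y \<Rightarrow> 'a) \<Rightarrow> real
     \<Rightarrow> ('x option \<times> 'y option) list \<Rightarrow> bool" where
  "sync_BCD_pair G Z fX fY K W \<longleftrightarrow>
     (let U = map fst W; V = map snd W in
      \<exists>g \<in> carrier G. real (word_length G Z g) \<le> K \<and>
        g \<otimes>\<^bsub>G\<^esub> word_val G fX U = word_val G fY V \<otimes>\<^bsub>G\<^esub> g \<and>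
        (\<forall>j::nat. real (word_length G Z
            (inv\<^bsub>G\<^esub> (word_val G fY (take j V)) \<otimes>\<^bsub>G\<^esub> g \<otimes>\<^bsub>G\<^esub> word_val G fX (take j U))) \<le> K))"

definition regular_lang :: "'s set \<Rightarrow> 's list set \<Rightarrow> bool" where
  "regular_lang Alph L \<longleftrightarrow> L \<subseteq> lists Alph \<and>
     (\<exists>(Q::nat set) q0 (delta :: nat \<Rightarrow> 's \<Rightarrow> nat) F.
        finite Q \<and> q0 \<in> Q \<and> (\<forall>q\<in>Q. \<forall>b\<in>Alph. delta q b \<in> Q) \<and> F \<subseteq> Q \<and>
        L = {w \<in> lists Alph. foldl delta q0 w \<in> F})"

end

theory Submission
  imports Defs
begin

text \<open>Let B be the (finite) ball of radius K in the word metric. Reading a word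
  letter by letter, a nondeterministic automaton guesses the conjugator g \<in> B and keeps
  track of the current element V_j^-1 g U_j, which is updated by
  conjugating with the next letter pair and must stay in B; the word is accepted when it
  returns to g. The subset construction over the finite state space B \<times> B gives a
  deterministic automaton.\<close>

lemma regular_langI:
  fixes Q :: "'t set" and delta :: "'t \<Rightarrow> 's \<Rightarrow> 't"
  assumes "L \<subseteq> lists A" "finite Q" "start \<in> Q" "\<forall>q\<in>Q. \<forall>b\<in>A. delta q b \<in> Q" "F \<subseteq> Q"
    and L: "L = {w \<in> lists A. foldl delta start w \<in> F}"
  shows "regular_lang A L"
proof -
  obtain enc :: "'t \<Rightarrow> nat" where enc: "inj_on enc Q"
    using finite_imp_inj_to_nat_seg[OF assms(2)] by blast
  define delta' where "delta' = (\<lambda>m b. enc (delta (inv_into Q enc m) b))"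
  have foldl_delta': "foldl delta' (enc q) w = enc (foldl delta q w) \<and> foldl delta q w \<in> Q"
    if "q \<in> Q" "w \<in> lists A" for q w
    using that
  proof (induction w arbitrary: q)
    case (Cons b w)
    then have "delta q b \<in> Q" using assms(4) by auto
    then show ?case using Cons enc by (simp add: delta'_def)
  qed simp
  have accept: "foldl delta' (enc start) w \<in> enc ` F \<longleftrightarrow> foldl delta start w \<in> F"
    if "w \<in> lists A" for w
    using foldl_delta'[OF assms(3) that] assms(5) enc
    by (metis (no_types, lifting) image_eqI inj_on_image_mem_iff)
  show ?thesis unfolding regular_lang_def
  proof (intro conjI exI)
    show "\<forall>q\<in>enc ` Q. \<forall>b\<in>A. delta' q b \<in> enc ` Q"
      using assms(4) enc by (auto simp: delta'_def)
    show "L = {w \<in> lists A. foldl delta' (enc start) w \<in> enc ` F}"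
      using accept L by auto
  qed (use assms in auto)
qed

lemma word_val_Nil [simp]: "word_val G f [] = \<one>\<^bsub>G\<^esub>"
  by (simp add: word_val_def)

lemma word_val_Cons [simp]: "word_val G f (a # U) = pad_val G f a \<otimes>\<^bsub>G\<^esub> word_val G f U"
  by (simp add: word_val_def)

definition track ::
  "('a, 'b) monoid_scheme \<Rightarrow> ('x \<Rightarrow> 'a) \<Rightarrow> ('y \<Rightarrow> 'a) \<Rightarrow> ('x option \<times> 'y option) list
     \<Rightarrow> 'a \<Rightarrow> nat \<Rightarrow> 'a" where
  "track G fX fY W g j = inv\<^bsub>G\<^esub> (word_val G fY (take j (map snd W))) \<otimes>\<^bsub>G\<^esub> g \<otimes>\<^bsub>G\<^esub>
      word_val G fX (take j (map fst W))"

definition track_step ::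
  "('a, 'b) monoid_scheme \<Rightarrow> ('x \<Rightarrow> 'a) \<Rightarrow> ('y \<Rightarrow> 'a) \<Rightarrow> 'a set \<Rightarrow> ('a \<times> 'a) set
     \<Rightarrow> 'x option \<times> 'y option \<Rightarrow> ('a \<times> 'a) set" where
  "track_step G fX fY B S b = {(g, e) | g e. \<exists>d. (g, d) \<in> S \<and>
      e = inv\<^bsub>G\<^esub> (pad_val G fY (snd b)) \<otimes>\<^bsub>G\<^esub> d \<otimes>\<^bsub>G\<^esub> pad_val G fX (fst b) \<and> e \<in> B}"

lemma track_append_le: "j \<le> length W \<Longrightarrow> track G fX fY (W @ [b]) g j = track G fX fY W g j"
  by (simp add: track_def)

lemma track_ge_length: "length W \<le> j \<Longrightarrow> track G fX fY W g j = track G fX fY W g (length W)"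
  by (simp add: track_def)

context group
begin

lemma foldr_mult_closed:
  "set zs \<subseteq> carrier G \<Longrightarrow> foldr (\<lambda>z acc. z \<otimes> acc) zs \<one> \<in> carrier G"
  by (induction zs) auto

lemma foldr_mult_append:
  assumes "set xs \<subseteq> carrier G" "set ys \<subseteq> carrier G"
  shows "foldr (\<lambda>z acc. z \<otimes> acc) (xs @ ys) \<one> =
     foldr (\<lambda>z acc. z \<otimes> acc) xs \<one> \<otimes> foldr (\<lambda>z acc. z \<otimes> acc) ys \<one>"
  using assms(1) foldr_mult_closed[OF assms(2)]
  by (induction xs) (auto simp: m_assoc foldr_mult_closed)

lemma generate_imp_foldr_mult:
  assumes "Z \<subseteq> carrier G" "\<forall>z\<in>Z. inv z \<in> Z" "h \<in> generate G Z"
  shows "\<exists>zs. set zs \<subseteq> Z \<and> h = foldr (\<lambda>z acc. z \<otimes> acc) zs \<one>"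
  using assms(3)
proof (induction rule: generate.induct)
  case one
  show ?case by (intro exI[of _ "[]"]) simp
next
  case (incl h)
  then show ?case using assms(1) by (intro exI[of _ "[h]"]) auto
next
  case (inv h)
  then show ?case using assms by (intro exI[of _ "[inv h]"]) auto
next
  case (eng h1 h2)
  then obtain xs ys where "set xs \<subseteq> Z" "h1 = foldr (\<lambda>z acc. z \<otimes> acc) xs \<one>"
    "set ys \<subseteq> Z" "h2 = foldr (\<lambda>z acc. z \<otimes> acc) ys \<one>" by blast
  then show ?case using foldr_mult_append[of xs ys] assms(1)
    by (intro exI[of _ "xs @ ys"]) auto
qed

lemma finite_word_length_ball:
  assumes "finite Z" "Z \<subseteq> carrier G" "\<forall>z\<in>Z. inv z \<in> Z" "generate G Z = carrier G"
  shows "finite {h \<in> carrier G. real (word_length G Z h) \<le> K}"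
proof -
  let ?prod = "\<lambda>zs. foldr (\<lambda>z acc. z \<otimes> acc) zs \<one>"
  have "{h \<in> carrier G. real (word_length G Z h) \<le> K} \<subseteq>
     ?prod ` {zs. set zs \<subseteq> Z \<and> length zs \<le> nat \<lfloor>K\<rfloor>}"
  proof
    fix h assume h: "h \<in> {h \<in> carrier G. real (word_length G Z h) \<le> K}"
    then have "\<exists>n zs. length zs = n \<and> set zs \<subseteq> Z \<and> h = ?prod zs"
      using generate_imp_foldr_mult[OF assms(2,3)] assms(4) by auto
    from LeastI_ex[OF this] obtain zs
      where zs: "length zs = word_length G Z h" "set zs \<subseteq> Z" "h = ?prod zs"
      unfolding word_length_def by blast
    then have "length zs \<le> nat \<lfloor>K\<rfloor>" using h by (simp add: le_nat_floor)
    then show "h \<in> ?prod ` {zs. set zs \<subseteq> Z \<and> length zs \<le> nat \<lfloor>K\<rfloor>}"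
      using zs by blast
  qed
  then show ?thesis using finite_lists_length_le[OF assms(1)] finite_subset by blast
qed

lemma inv_mult_mult_eq_iff:
  assumes "a \<in> carrier G" "b \<in> carrier G" "c \<in> carrier G"
  shows "inv a \<otimes> b \<otimes> c = b \<longleftrightarrow> b \<otimes> c = a \<otimes> b"
  using assms inv_solve_left[of b a "b \<otimes> c"] by (auto simp: m_assoc)

lemma pad_val_closed:
  "f ` A \<subseteq> carrier G \<Longrightarrow> a \<in> padded A \<Longrightarrow> pad_val G f a \<in> carrier G"
  by (auto simp: padded_def pad_val_def)

lemma word_val_closed:
  "f ` A \<subseteq> carrier G \<Longrightarrow> set U \<subseteq> padded A \<Longrightarrow> word_val G f U \<in> carrier G"
  by (induction U) (auto intro: pad_val_closed)

lemma word_val_snoc: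
  assumes "f ` A \<subseteq> carrier G" "set U \<subseteq> padded A" "a \<in> padded A"
  shows "word_val G f (U @ [a]) = word_val G f U \<otimes> pad_val G f a"
  using assms(2)
proof (induction U)
  case Nil
  then show ?case using pad_val_closed[OF assms(1,3)] by simp
next
  case (Cons x U)
  then show ?case
    using pad_val_closed[OF assms(1)] word_val_closed[OF assms(1)] assms(3)
    by (simp add: m_assoc)
qed

context
  fixes fX :: "'x \<Rightarrow> 'a" and fY :: "'y \<Rightarrow> 'a" and Xa :: "'x set" and Ya :: "'y set"
  assumes fX: "fX ` Xa \<subseteq> carrier G" and fY: "fY ` Ya \<subseteq> carrier G"
begin

lemma track_closed:
  assumes "W \<in> lists (padded Xa \<times> padded Ya)" "g \<in> carrier G"
  shows "track G fX fY W g j \<in> carrier G"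
proof -
  have "set (take j (map fst W)) \<subseteq> padded Xa" "set (take j (map snd W)) \<subseteq> padded Ya"
    using assms(1) set_take_subset[of j "map fst W"] set_take_subset[of j "map snd W"]
    by fastforce+
  then show ?thesis
    unfolding track_def using word_val_closed[OF fX] word_val_closed[OF fY] assms(2) by simp
qed

lemma track_snoc:
  assumes W: "W \<in> lists (padded Xa \<times> padded Ya)" and b: "b \<in> padded Xa \<times> padded Ya"
    and g: "g \<in> carrier G"
  shows "track G fX fY (W @ [b]) g (Suc (length W)) =
     inv (pad_val G fY (snd b)) \<otimes> track G fX fY W g (length W) \<otimes> pad_val G fX (fst b)"
proof -
  have U: "set (map fst W) \<subseteq> padded Xa" and V: "set (map snd W) \<subseteq> padded Ya"
    using W by auto
  have "track G fX fY (W @ [b]) g (Suc (length W)) =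
     inv (word_val G fY (map snd W) \<otimes> pad_val G fY (snd b)) \<otimes> g \<otimes>
       (word_val G fX (map fst W) \<otimes> pad_val G fX (fst b))"
    unfolding track_def using word_val_snoc[OF fX U] word_val_snoc[OF fY V] b by auto
  also have "\<dots> = inv (pad_val G fY (snd b)) \<otimes> track G fX fY W g (length W) \<otimes> pad_val G fX (fst b)"
    unfolding track_def
    using word_val_closed[OF fX U] word_val_closed[OF fY V] g
      pad_val_closed[OF fX, of "fst b"] pad_val_closed[OF fY, of "snd b"] b
    by (simp add: mem_Times_iff inv_mult_group m_assoc)
  finally show ?thesis .
qed

lemma foldl_track_step:
  assumes "B \<subseteq> carrier G" "W \<in> lists (padded Xa \<times> padded Ya)"
  shows "foldl (track_step G fX fY B) ((\<lambda>g. (g, g)) ` B) W =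
     {(g, track G fX fY W g (length W)) | g. g \<in> B \<and> (\<forall>j\<le>length W. track G fX fY W g j \<in> B)}"
  using assms(2)
proof (induction W rule: rev_induct)
  case Nil
  have "track G fX fY [] g j = g" if "g \<in> B" for g j
    using that assms(1) by (auto simp: track_def)
  then show ?case by auto
next
  case (snoc b W)
  have W: "W \<in> lists (padded Xa \<times> padded Ya)" and "b \<in> padded Xa \<times> padded Ya"
    using snoc.prems by auto
  then have "\<forall>g\<in>B. track G fX fY (W @ [b]) g (Suc (length W)) =
     inv (pad_val G fY (snd b)) \<otimes> track G fX fY W g (length W) \<otimes> pad_val G fX (fst b)"
    using track_snoc assms(1) by blast
  then show ?case
    using snoc.IH[OF W] by (auto simp: track_step_def track_append_le le_Suc_eq)
qed

lemma sync_BCD_pair_iff_track: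
  fixes Z :: "'a set" and K :: real
  assumes W: "W \<in> lists (padded Xa \<times> padded Ya)"
  defines "B \<equiv> {h \<in> carrier G. real (word_length G Z h) \<le> K}"
  shows "sync_BCD_pair G Z fX fY K W \<longleftrightarrow>
     (\<exists>g\<in>B. track G fX fY W g (length W) = g \<and> (\<forall>j\<le>length W. track G fX fY W g j \<in> B))"
proof -
  have "set (map fst W) \<subseteq> padded Xa" "set (map snd W) \<subseteq> padded Ya" using W by auto
  then have "word_val G fX (map fst W) \<in> carrier G" "word_val G fY (map snd W) \<in> carrier G"
    using word_val_closed[OF fX] word_val_closed[OF fY] by auto
  then have commutes: "g \<otimes> word_val G fX (map fst W) = word_val G fY (map snd W) \<otimes> g
      \<longleftrightarrow> track G fX fY W g (length W) = g" if "g \<in> carrier G" for g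
    using inv_mult_mult_eq_iff that by (simp add: track_def)
  have bounded: "(\<forall>j. real (word_length G Z (track G fX fY W g j)) \<le> K) \<longleftrightarrow>
      (\<forall>j\<le>length W. track G fX fY W g j \<in> B)" if g: "g \<in> carrier G" for g
  proof
    assume "\<forall>j. real (word_length G Z (track G fX fY W g j)) \<le> K"
    then show "\<forall>j\<le>length W. track G fX fY W g j \<in> B"
      using track_closed[OF W g] by (simp add: B_def)
  next
    assume in_B: "\<forall>j\<le>length W. track G fX fY W g j \<in> B"
    show "\<forall>j. real (word_length G Z (track G fX fY W g j)) \<le> K"
    proof
      fix j
      have "track G fX fY W g j \<in> B"
        using in_B track_ge_length[of W j G fX fY g] by (cases "j \<le> length W") auto
      then show "real (word_length G Z (track G fX fY W g j)) \<le> K" by (simp add: B_def)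
    qed
  qed
  have "sync_BCD_pair G Z fX fY K W \<longleftrightarrow>
     (\<exists>g\<in>carrier G. real (word_length G Z g) \<le> K \<and> track G fX fY W g (length W) = g \<and>
        (\<forall>j. real (word_length G Z (track G fX fY W g j)) \<le> K))"
    unfolding sync_BCD_pair_def Let_def track_def[symmetric] using commutes by metis
  also have "\<dots> \<longleftrightarrow>
     (\<exists>g\<in>B. track G fX fY W g (length W) = g \<and> (\<forall>j\<le>length W. track G fX fY W g j \<in> B))"
    using bounded by (auto simp: B_def)
  finally show ?thesis .
qed

end

end

theorem lemma5p11:
  fixes G :: "('a, 'b) monoid_scheme" and Z :: "'a set"
    and Xa :: "'x set" and Ya :: "'y set" and fX :: "'x \<Rightarrow> 'a" and fY :: "'y \<Rightarrow> 'a"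
    and K :: real
  assumes "group G"
    and "finite Z" and "Z \<subseteq> carrier G" and "\<forall>z\<in>Z. inv\<^bsub>G\<^esub> z \<in> Z"
    and "generate G Z = carrier G"
    and "finite Xa" and "finite Ya"
    and "fX ` Xa \<subseteq> carrier G" and "fY ` Ya \<subseteq> carrier G"
    and "K \<ge> 0"
  shows "regular_lang (padded Xa \<times> padded Ya)
           {W \<in> lists (padded Xa \<times> padded Ya). sync_BCD_pair G Z fX fY K W}"
proof -
  interpret group G by fact
  define B where "B = {h \<in> carrier G. real (word_length G Z h) \<le> K}"
  have "finite B" unfolding B_def using finite_word_length_ball assms(2-5) .
  have "B \<subseteq> carrier G" unfolding B_def by blast
  let ?delta = "track_step G fX fY B" and ?start = "(\<lambda>g. (g, g)) ` B"
    and ?accept = "{S \<in> Pow (B \<times> B). \<exists>g. (g, g) \<in> S}"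
  have "sync_BCD_pair G Z fX fY K W \<longleftrightarrow> foldl ?delta ?start W \<in> ?accept"
    if "W \<in> lists (padded Xa \<times> padded Ya)" for W
    unfolding sync_BCD_pair_iff_track[OF assms(8,9) that, where Z = Z and K = K, folded B_def]
      foldl_track_step[OF assms(8,9) \<open>B \<subseteq> carrier G\<close> that]
    by (auto; metis)
  then show ?thesis
    by (intro regular_langI[where Q = "Pow (B \<times> B)" and delta = ?delta and start = ?start and F = ?accept])
      (use \<open>finite B\<close> in \<open>auto simp: track_step_def\<close>)
qed

end
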